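(* Let $t \geq 1$ and $k \geq 1$ be integers, and let $\mathcal{F}$ be a finite family of finite sets with $\alpha(\mathcal{F}) \geq t$. Let $\mathcal{A}_1, \dots, \mathcal{A}_k$ be cross-$t$-intersecting sub-families of $\mathcal{F}$ such that $\sum_{i=1}^k |\mathcal{A}_i|$ is maximum among all $k$-tuples of cross-$t$-intersecting sub-families of $\mathcal{F}$. Then: (i) $\sum_{i=1}^k |\mathcal{A}_i| = k\, l(\mathcal{F},t)$ if $k \geq \kappa(\mathcal{F},t)$; (ii) $\sum_{i=1}^k |\mathcal{A}_i| > k\, l(\mathcal{F},t)$ if $k < \kappa(\mathcal{F},t)$.
   Context: All sets and families are finite. A family $\mathcal{A}$ is $t$-intersecting if $|A \cap B| \geq t$ for all $A, B \in \mathcal{A}$ with $A \neq B$. Families $\mathcal{A}_1, \dots, \mathcal{A}_k$ (not necessarily distinct or non-empty) are cross-$t$-intersecting if for all $i \neq j$, $|A \cap B| \geq t$ for every $A \in \mathcal{A}_i$ and $B \in \mathcal{A}_j$. For non-empty $\mathcal{F}$: $\alpha(\mathcal{F}) = \max\{|F| : F \in \mathcal{F}\}$; $l(\mathcal{F},t)$ is the size of a largest $t$-intersecting sub-family of $\mathcal{F}$. For a family $\mathcal{A}$, $\mathcal{A}^{t,+} = \{A \in \mathcal{A} : |A \cap B| \geq t \text{ for all } B \in \mathcal{A}\setminus\{A\}\}$ and $\mathcal{A}^{t,-} = \mathcal{A} \setminus \mathcal{A}^{t,+}$. For $\mathcal{A} \subseteq \mathcal{F}$, $\beta(\mathcal{F},t,\mathcal{A})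 = \frac{l(\mathcal{F},t) - |\mathcal{A}^{t,+}|}{|\mathcal{A}^{t,-}|}$ if $\mathcal{A}^{t,-} \neq \emptyset$, and $\frac{l(\mathcal{F},t)}{|\mathcal{F}|}$ otherwise; $\beta(\mathcal{F},t) = \min_{\mathcal{A} \subseteq \mathcal{F}} \beta(\mathcal{F},t,\mathcal{A})$ and $\kappa(\mathcal{F},t) = 1/\beta(\mathcal{F},t)$. *)

theory Defs
  imports Complex_Main
begin

definition t_intersecting :: "nat \<Rightarrow> 'a set set \<Rightarrow> bool" where
  "t_intersecting t \<A> \<longleftrightarrow> (\<forall>A\<in>\<A>. \<forall>B\<in>\<A>. A \<noteq> B \<longrightarrow> t \<le> card (A \<inter> B))"

definition cross_t_intersecting :: "nat \<Rightarrow> nat \<Rightarrow> (nat \<Rightarrow> 'a set set) \<Rightarrow> bool" where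
  "cross_t_intersecting t k As \<longleftrightarrow>
     (\<forall>i\<in>{1..k}. \<forall>j\<in>{1..k}. i \<noteq> j \<longrightarrow> (\<forall>A\<in>As i. \<forall>B\<in>As j. t \<le> card (A \<inter> B)))"

definition alpha_fam :: "'a set set \<Rightarrow> nat" where
  "alpha_fam F = Max (card ` F)"

definition l_fam :: "'a set set \<Rightarrow> nat \<Rightarrow> nat" where
  "l_fam F t = Max (card ` {G. G \<subseteq> F \<and> t_intersecting t G})"

definition plus_part :: "nat \<Rightarrow> 'a set set \<Rightarrow> 'a set set" where
  "plus_part t \<A> = {A\<in>\<A>. \<forall>B\<in>\<A> - {A}. t \<le> card (A \<inter> B)}"

definition minus_part :: "nat \<Rightarrow> 'a set set \<Rightarrow> 'a set set" where
  "minus_part t \<A> = \<A> - plus_part t \<A>"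

definition beta_sub :: "'a set set \<Rightarrow> nat \<Rightarrow> 'a set set \<Rightarrow> real" where
  "beta_sub F t \<A> =
     (if minus_part t \<A> \<noteq> {}
      then (real (l_fam F t) - real (card (plus_part t \<A>))) / real (card (minus_part t \<A>))
      else real (l_fam F t) / real (card F))"

definition beta_fam :: "'a set set \<Rightarrow> nat \<Rightarrow> real" where
  "beta_fam F t = Min (beta_sub F t ` Pow F)"

definition kappa_fam :: "'a set set \<Rightarrow> nat \<Rightarrow> real" where
  "kappa_fam F t = 1 / beta_fam F t"

end

theory Submission
  imports Defs
begin

text \<open>For \<open>A \<subseteq> F\<close> with \<open>A\<^sup>- \<noteq> {}\<close>, the \<open>k\<close>-tuple \<open>(A, A\<^sup>+, \<dots>, A\<^sup>+)\<close> is
  cross-\<open>t\<close>-intersecting and has total size \<open>k |A\<^sup>+| + |A\<^sup>-|\<close>; conversely, if \<open>U\<close> is the union of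
  a cross-\<open>t\<close>-intersecting tuple, every member of \<open>U\<^sup>-\<close> lies in at most one of its families, so
  the total size is at most \<open>k |U\<^sup>+| + |U\<^sup>-|\<close>. The constant tuple on a largest \<open>t\<close>-intersecting
  subfamily gives \<open>k l(F,t)\<close>. Comparing these quantities with \<open>k l(F,t)\<close> is exactly comparing
  \<open>k \<beta>(F,t,A)\<close> with 1.\<close>

lemma plus_part_subset: "plus_part t \<A> \<subseteq> \<A>"
  unfolding plus_part_def by auto

lemma card_plus_minus_part:
  "finite \<A> \<Longrightarrow> card \<A> = card (plus_part t \<A>) + card (minus_part t \<A>)"
  unfolding minus_part_def
  by (metis plus_part_subset card_Diff_subset card_mono finite_subset le_add_diff_inverse)

lemma minus_part_empty_iff: "minus_part t \<A> = {} \<longleftrightarrow> plus_part t \<A> = \<A>"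
  unfolding minus_part_def using plus_part_subset by blast

lemma card_minus_part_pos:
  "finite \<A> \<Longrightarrow> minus_part t \<A> \<noteq> {} \<Longrightarrow> 0 < card (minus_part t \<A>)"
  unfolding minus_part_def by (simp add: card_gt_0_iff)

lemma t_intersecting_plus_part: "t_intersecting t (plus_part t \<A>)"
  unfolding t_intersecting_def plus_part_def by auto

lemma t_intersecting_insert_plus_part:
  assumes "X \<in> \<A>"
  shows "t_intersecting t (insert X (plus_part t \<A>))"
  using assms unfolding t_intersecting_def plus_part_def by (auto simp: Int_commute)

text \<open>A member of \<open>\<A>\<^sup>+\<close> meets a member of \<open>\<A>\<^sup>-\<close> in at least \<open>t\<close> points, so it has at least
  \<open>t\<close> points itself; this covers the case \<open>X = Y\<close>.\<close>
lemma plus_part_intersecting_all: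
  assumes "X \<in> plus_part t \<A>" "Y \<in> \<A>" "minus_part t \<A> \<noteq> {}" "finite X"
  shows "t \<le> card (X \<inter> Y)"
proof (cases "X = Y")
  case False
  then show ?thesis using assms(1,2) unfolding plus_part_def by auto
next
  case True
  obtain Z where Z: "Z \<in> \<A>" "Z \<notin> plus_part t \<A>" using assms(3) unfolding minus_part_def by auto
  then have "t \<le> card (X \<inter> Z)" using assms(1) unfolding plus_part_def by auto
  also have "\<dots> \<le> card X" using assms(4) by (intro card_mono) auto
  finally show ?thesis using True by simp
qed

lemma card_le_l_fam:
  "finite F \<Longrightarrow> G \<subseteq> F \<Longrightarrow> t_intersecting t G \<Longrightarrow> card G \<le> l_fam F t"
  unfolding l_fam_def by (rule Max_ge) auto

lemma l_fam_attained:
  assumes "finite F"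
  obtains L where "L \<subseteq> F" "t_intersecting t L" "card L = l_fam F t"
proof -
  have "{} \<in> {G. G \<subseteq> F \<and> t_intersecting t G}" by (simp add: t_intersecting_def)
  then have "l_fam F t \<in> card ` {G. G \<subseteq> F \<and> t_intersecting t G}"
    unfolding l_fam_def using assms by (intro Max_in) auto
  then show ?thesis using that by auto
qed

lemma l_fam_pos: "finite F \<Longrightarrow> F \<noteq> {} \<Longrightarrow> 0 < l_fam F t"
proof -
  assume "finite F" "F \<noteq> {}"
  then obtain X where "X \<in> F" by auto
  then have "card {X} \<le> l_fam F t"
    using \<open>finite F\<close> by (intro card_le_l_fam) (auto simp: t_intersecting_def)
  then show ?thesis by simp
qed

lemma card_plus_part_less_l_fam:
  assumes "finite F" "\<A> \<subseteq> F" "minus_part t \<A> \<noteq> {}"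
  shows "card (plus_part t \<A>) < l_fam F t"
proof -
  obtain X where X: "X \<in> \<A>" "X \<notin> plus_part t \<A>" using assms(3) unfolding minus_part_def by auto
  have "finite (plus_part t \<A>)"
    using assms(1,2) plus_part_subset finite_subset by metis
  then have "card (plus_part t \<A>) < card (insert X (plus_part t \<A>))" using X(2) by simp
  also have "\<dots> \<le> l_fam F t"
    using assms(1,2) X(1) plus_part_subset t_intersecting_insert_plus_part
    by (intro card_le_l_fam) auto
  finally show ?thesis .
qed

text \<open>Unlike \<open>t_intersecting\<close>, the constant tuple also needs \<open>|X| \<ge> t\<close> for its members; when
  \<open>l(F,t) = 1\<close> this is where \<open>\<alpha>(F) \<ge> t\<close> enters.\<close>
lemma l_fam_self_intersecting_witness:
  assumes "finite F" "\<forall>X\<in>F. finite X" "F \<noteq> {}" "alpha_fam F \<ge> t"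
  obtains L where "L \<subseteq> F" "card L = l_fam F t" "\<forall>X\<in>L. \<forall>Y\<in>L. t \<le> card (X \<inter> Y)"
proof (cases "l_fam F t \<ge> 2")
  case True
  obtain L where L: "L \<subseteq> F" "t_intersecting t L" "card L = l_fam F t"
    using l_fam_attained assms(1) by blast
  have "t \<le> card (X \<inter> Y)" if X: "X \<in> L" and Y: "Y \<in> L" for X Y
  proof (cases "X = Y")
    case False
    then show ?thesis using L X Y unfolding t_intersecting_def by auto
  next
    case True
    have "\<not> L \<subseteq> {X}"
      using L(3) \<open>2 \<le> l_fam F t\<close> card_mono[of "{X}" L] by fastforce
    then obtain Z where Z: "Z \<in> L" "Z \<noteq> X" by auto
    then have "t \<le> card (X \<inter> Z)" using L X unfolding t_intersecting_def by auto
    also have "\<dots> \<le> card X" using X L assms(2) by (intro card_mono) auto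
    finally show ?thesis using True by simp
  qed
  then show ?thesis using L that by blast
next
  case False
  then have "l_fam F t = 1" using l_fam_pos[OF assms(1,3), of t] by simp
  have "alpha_fam F \<in> card ` F" unfolding alpha_fam_def using assms by (intro Max_in) auto
  then obtain X where "X \<in> F" "t \<le> card X" using assms(4) by auto
  then show ?thesis using \<open>l_fam F t = 1\<close> that[of "{X}"] by auto
qed

lemma beta_sub_pos:
  assumes "finite F" "F \<noteq> {}" "\<A> \<subseteq> F"
  shows "0 < beta_sub F t \<A>"
proof (cases "minus_part t \<A> = {}")
  case False
  have "card (plus_part t \<A>) < l_fam F t" using card_plus_part_less_l_fam assms False by blast
  moreover have "0 < card (minus_part t \<A>)"
    using card_minus_part_pos False assms finite_subset by blast
  ultimately show ?thesis using False unfolding beta_sub_def by simp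
next
  case True
  then show ?thesis using l_fam_pos[OF assms(1,2)] assms(1,2)
    unfolding beta_sub_def by (simp add: card_gt_0_iff)
qed

lemma beta_fam_pos: "finite F \<Longrightarrow> F \<noteq> {} \<Longrightarrow> 0 < beta_fam F t"
  unfolding beta_fam_def using beta_sub_pos by (subst Min_gr_iff) auto

lemma beta_fam_le: "finite F \<Longrightarrow> \<A> \<subseteq> F \<Longrightarrow> beta_fam F t \<le> beta_sub F t \<A>"
  unfolding beta_fam_def by (rule Min_le) auto

lemma beta_fam_attained:
  assumes "finite F"
  obtains \<A> where "\<A> \<subseteq> F" "beta_fam F t = beta_sub F t \<A>"
proof -
  have "beta_fam F t \<in> beta_sub F t ` Pow F"
    unfolding beta_fam_def using assms by (intro Min_in) auto
  then show ?thesis using that by auto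
qed

lemma kappa_fam_le_iff:
  "finite F \<Longrightarrow> F \<noteq> {} \<Longrightarrow> kappa_fam F t \<le> x \<longleftrightarrow> 1 \<le> x * beta_fam F t"
  unfolding kappa_fam_def by (simp add: beta_fam_pos pos_divide_le_eq)

lemma plus_minus_bound_le_l_fam:
  assumes "finite F" "\<A> \<subseteq> F" "1 \<le> real k * beta_sub F t \<A>"
  shows "k * card (plus_part t \<A>) + card (minus_part t \<A>) \<le> k * l_fam F t"
proof (cases "minus_part t \<A> = {}")
  case True
  have "plus_part t \<A> \<subseteq> F" using assms(2) plus_part_subset by blast
  then have "card (plus_part t \<A>) \<le> l_fam F t"
    using assms(1) t_intersecting_plus_part card_le_l_fam by blast
  then show ?thesis using True by simp
next
  case False
  have "0 < card (minus_part t \<A>)"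
    using card_minus_part_pos False assms(1,2) finite_subset by blast
  then have "real (card (minus_part t \<A>))
      \<le> real k * (real (l_fam F t) - real (card (plus_part t \<A>)))"
    using assms(3) False unfolding beta_sub_def by (simp add: field_simps)
  then have "real (k * card (plus_part t \<A>) + card (minus_part t \<A>)) \<le> real (k * l_fam F t)"
    by (simp add: algebra_simps)
  then show ?thesis by linarith
qed

text \<open>If the minimum defining \<open>\<beta>(F,t)\<close> is attained at some \<open>\<A>\<close> with \<open>\<A>\<^sup>- = {}\<close>, then
  \<open>k l(F,t) < |F|\<close>, and the witness is \<open>F\<close> itself.\<close>
lemma plus_minus_bound_gt_l_fam:
  assumes "finite F" "F \<noteq> {}" "k \<ge> 1" "real k * beta_fam F t < 1"
  obtains \<A> where "\<A> \<subseteq> F" "minus_part t \<A> \<noteq> {}"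
    "k * l_fam F t < k * card (plus_part t \<A>) + card (minus_part t \<A>)"
proof -
  obtain \<A> where \<A>: "\<A> \<subseteq> F" "beta_fam F t = beta_sub F t \<A>"
    using beta_fam_attained assms(1) by blast
  show ?thesis
  proof (cases "minus_part t \<A> = {}")
    case False
    have "0 < card (minus_part t \<A>)"
      using card_minus_part_pos False \<A>(1) assms(1) finite_subset by blast
    then have "real k * (real (l_fam F t) - real (card (plus_part t \<A>)))
        < real (card (minus_part t \<A>))"
      using assms(4) False \<A>(2) unfolding beta_sub_def by (simp add: field_simps)
    then have "real (k * l_fam F t) < real (k * card (plus_part t \<A>) + card (minus_part t \<A>))"
      by (simp add: algebra_simps)
    then show ?thesis by (intro that[OF \<A>(1) False]) (simp only: of_nat_less_iff)
  next
    case True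
    have "real k * real (l_fam F t) < real (card F)"
      using assms True \<A>(2) unfolding beta_sub_def by (simp add: card_gt_0_iff field_simps)
    then have kl: "k * l_fam F t < card F" by (simp flip: of_nat_mult)
    have "minus_part t F \<noteq> {}"
    proof
      assume "minus_part t F = {}"
      then have "card F \<le> l_fam F t"
        using assms(1) t_intersecting_plus_part[of t F] card_le_l_fam[of F F t]
        by (simp add: minus_part_empty_iff)
      then show False using kl assms(3) by (metis le_trans mult_le_mono1 mult_1 not_le)
    qed
    moreover have "card F \<le> k * card (plus_part t F) + card (minus_part t F)"
      using card_plus_minus_part[OF assms(1), of t] assms(3) by simp
    ultimately show ?thesis using that[of F] kl by simp
  qed
qed

lemma cross_t_intersecting_plus_part_tuple:
  assumes "minus_part t \<A> \<noteq> {}" "\<forall>X\<in>\<A>. finite X"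
  shows "cross_t_intersecting t k (\<lambda>i. if i = 1 then \<A> else plus_part t \<A>)"
  unfolding cross_t_intersecting_def
proof (intro ballI impI)
  fix i j :: nat and X Y
  assume "i \<noteq> j" "X \<in> (if i = 1 then \<A> else plus_part t \<A>)"
    "Y \<in> (if j = 1 then \<A> else plus_part t \<A>)"
  then consider "X \<in> plus_part t \<A>" "Y \<in> \<A>" | "Y \<in> plus_part t \<A>" "X \<in> \<A>"
    using plus_part_subset by (auto split: if_splits)
  then show "t \<le> card (X \<inter> Y)"
    using plus_part_intersecting_all[OF _ _ assms(1)] assms(2) plus_part_subset[of t \<A>]
    by cases (metis Int_commute subsetD)+
qed

lemma sum_card_plus_part_tuple:
  assumes "k \<ge> 1" "finite \<A>"
  shows "(\<Sum>i=1..k. card (if i = 1 then \<A> else plus_part t \<A>))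
    = k * card (plus_part t \<A>) + card (minus_part t \<A>)"
proof -
  have "{1..k} = insert 1 {2..k}" using assms(1) by auto
  then have "(\<Sum>i=1..k. card (if i = 1 then \<A> else plus_part t \<A>))
      = card \<A> + (k - 1) * card (plus_part t \<A>)"
    by (simp add: sum.cong[of "{2..k}" _ _ "\<lambda>_. card (plus_part t \<A>)"])
  then show ?thesis using card_plus_minus_part[OF assms(2), of t] assms(1)
    by (cases k) auto
qed

lemma plus_part_tuple:
  assumes "k \<ge> 1" "finite F" "\<forall>X\<in>F. finite X" "\<A> \<subseteq> F" "minus_part t \<A> \<noteq> {}"
  obtains Bs where "\<forall>i\<in>{1..k}. Bs i \<subseteq> F" "cross_t_intersecting t k Bs"
    "(\<Sum>i=1..k. card (Bs i)) = k * card (plus_part t \<A>) + card (minus_part t \<A>)"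
proof (rule that)
  show "\<forall>i\<in>{1..k}. (if i = 1 then \<A> else plus_part t \<A>) \<subseteq> F"
    using assms(4) plus_part_subset by auto
  show "cross_t_intersecting t k (\<lambda>i. if i = 1 then \<A> else plus_part t \<A>)"
    using assms(3-5) by (intro cross_t_intersecting_plus_part_tuple) auto
  show "(\<Sum>i=1..k. card (if i = 1 then \<A> else plus_part t \<A>))
      = k * card (plus_part t \<A>) + card (minus_part t \<A>)"
    using assms(2,4) finite_subset by (intro sum_card_plus_part_tuple[OF assms(1)]) blast
qed

lemma constant_tuple_l_fam:
  assumes "finite F" "\<forall>X\<in>F. finite X" "F \<noteq> {}" "alpha_fam F \<ge> t"
  obtains Bs where "\<forall>i\<in>{1..k}. Bs i \<subseteq> F" "cross_t_intersecting t k Bs"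
    "(\<Sum>i=1..k. card (Bs i)) = k * l_fam F t"
proof -
  obtain L where "L \<subseteq> F" "card L = l_fam F t" "\<forall>X\<in>L. \<forall>Y\<in>L. t \<le> card (X \<inter> Y)"
    using l_fam_self_intersecting_witness assms by blast
  then show ?thesis using that[of "\<lambda>_. L"] unfolding cross_t_intersecting_def by auto
qed

text \<open>A member of \<open>U\<^sup>-\<close> fails to \<open>t\<close>-intersect some member of \<open>U\<close>, which lies in some family
  \<open>As j\<close>; cross-intersection then forbids it from lying in any family other than \<open>As j\<close>.\<close>
lemma card_families_containing_minus_part:
  assumes "cross_t_intersecting t k As" "X \<in> minus_part t (\<Union>i\<in>{1..k}. As i)"
  shows "card {i\<in>{1..k}. X \<in> As i} \<le> 1"
proof -
  obtain Y j where Y: "j \<in> {1..k}" "Y \<in> As j" "Y \<noteq> X" "\<not> t \<le> card (X \<inter> Y)"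
    using assms(2) unfolding minus_part_def plus_part_def by blast
  have "{i\<in>{1..k}. X \<in> As i} \<subseteq> {j}"
    using assms(1) Y unfolding cross_t_intersecting_def by blast
  then show ?thesis using card_mono[of "{j}"] by fastforce
qed

lemma sum_card_le_plus_minus_bound:
  assumes "finite F" "\<forall>i\<in>{1..k}. As i \<subseteq> F" "cross_t_intersecting t k As"
  defines "U \<equiv> \<Union>i\<in>{1..k}. As i"
  shows "(\<Sum>i=1..k. card (As i)) \<le> k * card (plus_part t U) + card (minus_part t U)"
proof -
  define m where "m X = card {i\<in>{1..k}. X \<in> As i}" for X
  have "finite U" using assms(1,2) finite_subset unfolding U_def by blast
  have "card (As i) = (\<Sum>X\<in>U. if X \<in> As i then 1 else 0)" if "i \<in> {1..k}" for i
  proof -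
    have "As i \<subseteq> U" using that unfolding U_def by blast
    then show ?thesis using \<open>finite U\<close> by (simp add: sum.If_cases Int_absorb1)
  qed
  then have "(\<Sum>i=1..k. card (As i)) = (\<Sum>i=1..k. \<Sum>X\<in>U. if X \<in> As i then 1 else 0)"
    by (rule sum.cong[OF refl])
  also have "\<dots> = (\<Sum>X\<in>U. m X)"
    unfolding m_def by (subst sum.swap) (simp add: sum.If_cases Int_def)
  also have "\<dots> = (\<Sum>X\<in>plus_part t U. m X) + (\<Sum>X\<in>minus_part t U. m X)"
    unfolding minus_part_def using \<open>finite U\<close> plus_part_subset
    by (metis sum.subset_diff add.commute)
  also have "\<dots> \<le> (\<Sum>X\<in>plus_part t U. k) + (\<Sum>X\<in>minus_part t U. 1)"
  proof (intro add_mono sum_mono)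
    show "m X \<le> k" for X
      unfolding m_def by (rule order_trans[OF card_mono[of "{1..k}"]]) auto
    show "m X \<le> 1" if "X \<in> minus_part t U" for X
      using card_families_containing_minus_part assms(3) that unfolding m_def U_def by blast
  qed
  finally show ?thesis by (simp add: mult.commute)
qed

lemma sum_card_le_l_fam_if_kappa_le:
  assumes "finite F" "F \<noteq> {}" "\<forall>i\<in>{1..k}. As i \<subseteq> F" "cross_t_intersecting t k As"
    and "kappa_fam F t \<le> real k"
  shows "(\<Sum>i=1..k. card (As i)) \<le> k * l_fam F t"
proof -
  let ?U = "\<Union>i\<in>{1..k}. As i"
  have "?U \<subseteq> F" using assms(3) by auto
  have "1 \<le> real k * beta_fam F t" using assms(5) kappa_fam_le_iff[OF assms(1,2)] by blast
  also have "\<dots> \<le> real k * beta_sub F t ?U"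
    using beta_fam_le[OF assms(1) \<open>?U \<subseteq> F\<close>] by (simp add: mult_left_mono)
  finally show ?thesis
    using sum_card_le_plus_minus_bound[OF assms(1,3,4)]
      plus_minus_bound_le_l_fam[OF assms(1) \<open>?U \<subseteq> F\<close>] by (meson le_trans)
qed

theorem theorem1p2:
  fixes F :: "'a set set" and t k :: nat and As :: "nat \<Rightarrow> 'a set set"
  assumes "t \<ge> 1" and "k \<ge> 1"
    and "finite F" and "\<forall>X\<in>F. finite X" and "F \<noteq> {}"
    and "alpha_fam F \<ge> t"
    and "\<forall>i\<in>{1..k}. As i \<subseteq> F"
    and "cross_t_intersecting t k As"
    and "\<forall>Bs. (\<forall>i\<in>{1..k}. Bs i \<subseteq> F) \<and> cross_t_intersecting t k Bs
           \<longrightarrow> (\<Sum>i=1..k. card (Bs i)) \<le> (\<Sum>i=1..k. card (As i))"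
  shows "(real k \<ge> kappa_fam F t \<longrightarrow> (\<Sum>i=1..k. card (As i)) = k * l_fam F t)
       \<and> (real k < kappa_fam F t \<longrightarrow> (\<Sum>i=1..k. card (As i)) > k * l_fam F t)"
proof -
  define M where "M = (\<Sum>i=1..k. card (As i))"
  have maximal: "(\<Sum>i=1..k. card (Bs i)) \<le> M"
    if "\<forall>i\<in>{1..k}. Bs i \<subseteq> F" "cross_t_intersecting t k Bs" for Bs
    using assms(9) that unfolding M_def by blast
  obtain Bs where Bs: "\<forall>i\<in>{1..k}. Bs i \<subseteq> F" "cross_t_intersecting t k Bs"
    "(\<Sum>i=1..k. card (Bs i)) = k * l_fam F t"
    by (rule constant_tuple_l_fam[OF assms(3-6)])
  then have "k * l_fam F t \<le> M" using maximal[OF Bs(1,2)] by simp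
  moreover have "M \<le> k * l_fam F t" if "kappa_fam F t \<le> real k"
    using sum_card_le_l_fam_if_kappa_le[OF assms(3,5,7,8) that] unfolding M_def .
  moreover have "k * l_fam F t < M" if "real k < kappa_fam F t"
  proof -
    have "real k * beta_fam F t < 1"
      using that kappa_fam_le_iff[OF assms(3,5), of t "real k"] by linarith
    then obtain \<A> where \<A>: "\<A> \<subseteq> F" "minus_part t \<A> \<noteq> {}"
      "k * l_fam F t < k * card (plus_part t \<A>) + card (minus_part t \<A>)"
      using plus_minus_bound_gt_l_fam[OF assms(3,5,2)] by blast
    obtain Bs where Bs: "\<forall>i\<in>{1..k}. Bs i \<subseteq> F" "cross_t_intersecting t k Bs"
      "(\<Sum>i=1..k. card (Bs i)) = k * card (plus_part t \<A>) + card (minus_part t \<A>)"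
      by (rule plus_part_tuple[OF assms(2-4) \<A>(1,2)])
    then show ?thesis using maximal[OF Bs(1,2)] \<A>(3) by simp
  qed
  ultimately show ?thesis unfolding M_def by auto
qed

end
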